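(* Let $A=(a_{ij})_{i,j\in\mathbb{N}}\in\{0,1\}^{\mathbb{N}\times\mathbb{N}}$ be a binary matrix in which the row and column upper/lower asymptotic densities are separated, i.e., there exist reals $0\le\alpha<\beta\le1$ with $\bar d(\mathbf{r}^{(i)})\le\alpha$ and $\underline d(\mathbf{c}^{(j)})\ge\beta$ for all $i,j\in\mathbb{N}$. Then $A$ contains a fully lower-triangular submatrix.
   Context: For $\mathbf{a}=(a_k)_{k\in\mathbb{N}}\in\{0,1\}^{\mathbb{N}}$, $\bar d(\mathbf{a})=\limsup_{n\to\infty}\frac1n\sum_{k=1}^na_k$ and $\underline d(\mathbf{a})=\liminf_{n\to\infty}\frac1n\sum_{k=1}^na_k$. The $i$-th row of $A$ is $\mathbf{r}^{(i)}=(a_{ij})_{j\in\mathbb{N}}$ and the $j$-th column is $\mathbf{c}^{(j)}=(a_{ij})_{i\in\mathbb{N}}$. $A$ contains a fully lower-triangular submatrix if there exist sequences of distinct row indices $i_1,i_2,\ldots$ and distinct column indices $j_1,j_2,\ldots$ such that $a_{i_kj_l}=1\iff k\ge l$. *)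

theory Defs
  imports "HOL-Analysis.Analysis"
begin

text \<open>Binary sequences indexed by positive naturals; a sequence is a map
  nat => nat with values in {0,1} (index 0 is ignored).
  Partial averages (1/n) * sum_{k=1..n} a_k.\<close>

definition avg_seq :: "(nat \<Rightarrow> nat) \<Rightarrow> nat \<Rightarrow> real" where
  "avg_seq a n = (\<Sum>k=1..n. real (a k)) / real n"

definition upper_density :: "(nat \<Rightarrow> nat) \<Rightarrow> ereal" where
  "upper_density a = limsup (\<lambda>n. ereal (avg_seq a n))"

definition lower_density :: "(nat \<Rightarrow> nat) \<Rightarrow> ereal" where
  "lower_density a = liminf (\<lambda>n. ereal (avg_seq a n))"

definition row :: "(nat \<Rightarrow> nat \<Rightarrow> nat) \<Rightarrow> nat \<Rightarrow> nat \<Rightarrow> nat" where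
  "row A i = (\<lambda>j. A i j)"

definition col :: "(nat \<Rightarrow> nat \<Rightarrow> nat) \<Rightarrow> nat \<Rightarrow> nat \<Rightarrow> nat" where
  "col A j = (\<lambda>i. A i j)"

definition has_fully_lower_triangular_submatrix :: "(nat \<Rightarrow> nat \<Rightarrow> nat) \<Rightarrow> bool" where
  "has_fully_lower_triangular_submatrix A \<longleftrightarrow>
     (\<exists>rI cJ :: nat \<Rightarrow> nat.
        inj_on rI {1..} \<and> inj_on cJ {1..} \<and> rI ` {1..} \<subseteq> {1..} \<and> cJ ` {1..} \<subseteq> {1..} \<and>
        (\<forall>k\<ge>1. \<forall>l\<ge>1. A (rI k) (cJ l) = 1 \<longleftrightarrow> k \<ge> l))"

end

theory Submission
  imports Defs "HOL-Probability.Probability"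
begin

(*
  Encode each index n by the 0/1 sequence x_n whose coordinate 2c records a_{nc} = 1 and whose
  coordinate 2r+1 records a_{rn} = 0. Along a subsequence N_t the empirical distributions of
  x_1, ..., x_{N_t} converge on every cylinder set, and Kolmogorov's extension theorem turns the
  limits into a probability measure mu on sequences. By the density hypotheses, under mu every even
  coordinate is 1 with probability at least beta and every odd one with probability at least 1 - alpha.

  For a fixed sequence a, the sequences b that are not cluster points of {x_n : a_{2n} = 1} have
  mu-measure at most the lower density of {n : a_{2n} <> 1} along N_t. By Fatou's lemma, for a and b
  drawn independently from mu this happens with probability at most 1 - beta, and a fails to be a
  cluster point of {x_n : b_{2n+1} = 1} with probability at most alpha. Since alpha < beta some pair
  (a, b) does both, and picking columns alternately close to b and rows close to a yields the
  fully lower-triangular submatrix.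
*)

section \<open>Frequencies\<close>

definition frequency :: "nat set \<Rightarrow> nat \<Rightarrow> real" where
  "frequency Q N = real (card (Q \<inter> {1..N})) / real N"

lemma frequency_nonneg: "0 \<le> frequency Q N"
  by (simp add: frequency_def)

lemma frequency_le_1: "frequency Q N \<le> 1"
proof -
  have "card (Q \<inter> {1..N}) \<le> N"
    using card_mono[of "{1..N}" "Q \<inter> {1..N}"] by auto
  then show ?thesis
    by (cases "N = 0") (auto simp: frequency_def divide_le_eq)
qed

lemma frequency_cong:
  assumes "\<And>n. 1 \<le> n \<Longrightarrow> n \<le> N \<Longrightarrow> n \<in> P \<longleftrightarrow> n \<in> Q"
  shows "frequency P N = frequency Q N"
proof -
  have "P \<inter> {1..N} = Q \<inter> {1..N}"
    using assms by auto
  then show ?thesis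
    by (simp add: frequency_def)
qed

lemma frequency_UNIV: "1 \<le> N \<Longrightarrow> frequency UNIV N = 1"
  by (simp add: frequency_def)

lemma frequency_Compl:
  assumes "1 \<le> N"
  shows "frequency (- Q) N = 1 - frequency Q N"
proof -
  have "- Q \<inter> {1..N} = {1..N} - Q \<inter> {1..N}"
    by blast
  then have "card (- Q \<inter> {1..N}) = N - card (Q \<inter> {1..N})"
    by (simp add: card_Diff_subset)
  moreover have "card (Q \<inter> {1..N}) \<le> N"
    using card_mono[of "{1..N}" "Q \<inter> {1..N}"] by auto
  ultimately show ?thesis
    using assms by (simp add: frequency_def of_nat_diff diff_divide_distrib)
qed

lemma frequency_le_initial_segment_Un:
  assumes "P \<subseteq> {..j} \<union> Q"
  shows "frequency P N \<le> real j / real N + frequency Q N"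
proof -
  have "P \<inter> {1..N} \<subseteq> {1..j} \<union> Q \<inter> {1..N}"
    using assms by auto
  then have "card (P \<inter> {1..N}) \<le> card ({1..j} \<union> Q \<inter> {1..N})"
    by (intro card_mono) auto
  also have "\<dots> \<le> j + card (Q \<inter> {1..N})"
    using card_Un_le[of "{1..j}" "Q \<inter> {1..N}"] by simp
  finally show ?thesis
    by (simp add: frequency_def add_divide_distrib[symmetric] divide_right_mono)
qed

lemma frequency_UN_disjoint:
  assumes "finite U" and "disjoint_family_on P U"
  shows "frequency (\<Union>u\<in>U. P u) N = (\<Sum>u\<in>U. frequency (P u) N)"
proof -
  have "card (\<Union>u\<in>U. P u \<inter> {1..N}) = (\<Sum>u\<in>U. card (P u \<inter> {1..N}))"
    using assms by (intro card_UN_disjoint) (auto simp: disjoint_family_on_def)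
  then show ?thesis
    by (simp add: frequency_def sum_divide_distrib[symmetric] flip: of_nat_sum)
qed

lemma frequency_eq_sum_of_bool:
  "frequency {n. P n} N = (\<Sum>n=1..N. of_bool (P n)) / real N"
  by (simp add: frequency_def Int_def conj_commute flip: sum.inter_filter)

lemma avg_seq_eq_frequency:
  assumes "\<And>n. 1 \<le> n \<Longrightarrow> f n \<in> {0, 1}"
  shows "avg_seq f N = frequency {n. f n = 1} N"
proof -
  have "(\<Sum>k=1..N. real (f k)) = (\<Sum>k=1..N. of_bool (f k = 1))"
    using assms by (intro sum.cong) force+
  then show ?thesis
    by (simp add: avg_seq_def frequency_eq_sum_of_bool)
qed

section \<open>Limits of empirical distributions\<close>

lemma diagonal_convergent_subseq:
  fixes f :: "'i \<Rightarrow> nat \<Rightarrow> 'a::heine_borel"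
  assumes "countable I" and bounded: "\<And>i. i \<in> I \<Longrightarrow> bounded (range (f i))"
  obtains s where "strict_mono s" and "\<And>i. i \<in> I \<Longrightarrow> convergent (\<lambda>t. f i (s t))"
proof (cases "I = {}")
  case True
  then show ?thesis using that[of id] by (simp add: strict_mono_id)
next
  case False
  define g where "g m = f (from_nat_into I m)" for m
  interpret S: subseqs "\<lambda>m s. convergent (\<lambda>t. g m (s t))"
  proof
    fix m and s :: "nat \<Rightarrow> nat"
    have "bounded (range (\<lambda>t. g m (s t)))"
      using bounded[OF from_nat_into[OF False, of m]] unfolding g_def
      by (rule bounded_subset) auto
    then obtain l r where "strict_mono r" "((\<lambda>t. g m (s t)) \<circ> r) \<longlonglongrightarrow> l"
      using bounded_imp_convergent_subsequence by blast
    then show "\<exists>r. strict_mono r \<and> convergent (\<lambda>t. g m ((s \<circ> r) t))"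
      by (auto simp: convergent_def o_def)
  qed
  have "convergent (\<lambda>t. g m (S.diagseq t))" for m
  proof -
    have "convergent (\<lambda>t. g m ((S.diagseq \<circ> (+) (Suc m)) t))"
    proof (rule S.diagseq_holds)
      fix r s n
      assume "strict_mono (r :: nat \<Rightarrow> nat)" "convergent (\<lambda>t. g n (s t))"
      then show "convergent (\<lambda>t. g n ((s \<circ> r) t))"
        using convergent_subseq_convergent[of "\<lambda>t. g n (s t)" r] by (simp add: o_def)
    qed
    then obtain l where "(\<lambda>t. g m (S.diagseq (t + Suc m))) \<longlonglongrightarrow> l"
      by (auto simp: convergent_def o_def add.commute)
    then show ?thesis
      unfolding convergent_def by (blast intro: LIMSEQ_offset)
  qed
  then show ?thesis
    using that[OF S.subseq_diagseq] from_nat_into_to_nat_on[OF assms(1)]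
    unfolding g_def by metis
qed

lemma ge_limit_of_subseq:
  assumes "strict_mono s" and "(\<lambda>t. g (s t)) \<longlonglongrightarrow> L"
    and "ereal \<beta> \<le> liminf (\<lambda>n. ereal (g n))"
  shows "\<beta> \<le> L"
proof -
  have "liminf (\<lambda>n. ereal (g n)) \<le> liminf ((\<lambda>n. ereal (g n)) \<circ> s)"
    by (rule liminf_subseq_mono[OF assms(1)])
  also have "\<dots> = ereal L"
    using assms(2) by (intro lim_imp_Liminf) (auto simp: o_def)
  finally have "ereal \<beta> \<le> ereal L"
    using assms(3) by (rule order_trans[rotated])
  then show ?thesis by simp
qed

lemma le_limit_of_subseq:
  assumes "strict_mono s" and "(\<lambda>t. g (s t)) \<longlonglongrightarrow> L"
    and "limsup (\<lambda>n. ereal (g n)) \<le> ereal \<alpha>"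
  shows "L \<le> \<alpha>"
proof -
  have "ereal L = limsup ((\<lambda>n. ereal (g n)) \<circ> s)"
    using assms(2) by (intro lim_imp_Limsup[symmetric]) (auto simp: o_def)
  also have "\<dots> \<le> limsup (\<lambda>n. ereal (g n))"
    by (rule limsup_subseq_mono[OF assms(1)])
  finally have "ereal L \<le> ereal \<alpha>"
    using assms(3) by (rule order_trans)
  then show ?thesis by simp
qed

lemma ennreal_le_liminf_of_tendsto:
  assumes "h \<longlonglongrightarrow> L" and "eventually (\<lambda>t. h t \<le> g t) sequentially"
  shows "ennreal L \<le> liminf (\<lambda>t. ennreal (g t))"
proof -
  have "liminf (\<lambda>t. ennreal (h t)) = ennreal L"
    using assms(1) by (intro lim_imp_Liminf tendsto_ennrealI) auto
  moreover have "liminf (\<lambda>t. ennreal (h t)) \<le> liminf (\<lambda>t. ennreal (g t))"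
    using assms(2) by (intro Liminf_mono) (auto elim: eventually_mono intro: ennreal_leI)
  ultimately show ?thesis by simp
qed

locale empirical_limit = prob_space \<mu> for \<mu> :: "(nat \<Rightarrow> real) measure" +
  fixes x :: "nat \<Rightarrow> nat \<Rightarrow> real" and s :: "nat \<Rightarrow> nat"
  assumes strict_mono_subseq: "strict_mono s"
    and sets_eq: "sets \<mu> = sets (\<Pi>\<^sub>M i\<in>UNIV. borel)"
    and tendsto_frequency: "\<And>J V. finite J \<Longrightarrow> V \<in> sets (\<Pi>\<^sub>M i\<in>J. borel) \<Longrightarrow>
      (\<lambda>t. frequency {n. restrict (x n) J \<in> V} (s t)) \<longlonglongrightarrow> prob {\<omega>. restrict \<omega> J \<in> V}"

definition binary_patterns :: "nat set \<Rightarrow> (nat \<Rightarrow> real) set" where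
  "binary_patterns J = (\<Pi>\<^sub>E i\<in>J. {0, 1})"

lemma finite_binary_patterns: "finite J \<Longrightarrow> finite (binary_patterns J)"
  by (simp add: binary_patterns_def finite_PiE)

lemma restrict_binary_pattern: "u \<in> binary_patterns J \<Longrightarrow> restrict u J = u"
  by (simp add: binary_patterns_def PiE_def extensional_restrict)

lemma ex_subseq_convergent_pattern_frequencies:
  fixes x :: "nat \<Rightarrow> nat \<Rightarrow> real"
  obtains s where "strict_mono s"
    and "\<And>k u. u \<in> binary_patterns {..<k} \<Longrightarrow>
      convergent (\<lambda>t. frequency {n. restrict (x n) {..<k} = u} (s t))"
proof -
  have "countable (SIGMA k:UNIV. binary_patterns {..<k})"
    by (intro countable_SIGMA) (auto intro: countable_finite finite_binary_patterns)
  moreover have "bounded (range (\<lambda>N. frequency P N))" for P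
    using frequency_nonneg frequency_le_1 by (intro boundedI[of _ 1]) auto
  ultimately obtain s where "strict_mono s"
    and "\<And>p. p \<in> (SIGMA k:UNIV. binary_patterns {..<k}) \<Longrightarrow>
      convergent (\<lambda>t. frequency {n. restrict (x n) {..<fst p} = snd p} (s t))"
    by (rule diagonal_convergent_subseq
        [where f = "\<lambda>p. frequency {n. restrict (x n) {..<fst p} = snd p}"]) blast
  then show ?thesis
    using that by fastforce
qed

locale binary_frequency_limits =
  fixes x :: "nat \<Rightarrow> nat \<Rightarrow> real" and s :: "nat \<Rightarrow> nat"
  assumes binary: "x n i \<in> {0, 1}"
    and strict_mono_subseq: "strict_mono s"
    and convergent_pattern_frequency: "\<And>k u. u \<in> binary_patterns {..<k} \<Longrightarrow>
      convergent (\<lambda>t. frequency {n. restrict (x n) {..<k} = u} (s t))"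
begin

lemma restrict_in_binary_patterns: "restrict (x n) J \<in> binary_patterns J"
  using binary by (simp add: binary_patterns_def)

lemma frequency_split_patterns:
  assumes "finite K" and "J \<subseteq> K"
  shows "frequency {n. restrict (x n) J \<in> V} N =
    (\<Sum>u\<in>{u \<in> binary_patterns K. restrict u J \<in> V}. frequency {n. restrict (x n) K = u} N)"
proof -
  have restrict_restrict: "restrict (restrict (x n) K) J = restrict (x n) J" for n
    using assms(2) by (auto simp: fun_eq_iff)
  have "{n. restrict (x n) J \<in> V} =
      (\<Union>u\<in>{u \<in> binary_patterns K. restrict u J \<in> V}. {n. restrict (x n) K = u})"
    using restrict_in_binary_patterns restrict_restrict by auto
  then show ?thesis
    using finite_binary_patterns[OF assms(1)]
    by (simp only:) (rule frequency_UN_disjoint, auto simp: disjoint_family_on_def)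
qed

lemma convergent_frequency:
  assumes "finite J"
  shows "convergent (\<lambda>t. frequency {n. restrict (x n) J \<in> V} (s t))"
proof -
  define k where "k = Suc (Max (insert 0 J))"
  have "J \<subseteq> {..<k}"
    using assms by (auto simp: k_def less_Suc_eq_le)
  then show ?thesis
    using convergent_pattern_frequency unfolding frequency_split_patterns[OF finite_lessThan \<open>J \<subseteq> {..<k}\<close>]
    by (intro convergent_sum) auto
qed

definition limit_frequency :: "nat set \<Rightarrow> (nat \<Rightarrow> real) set \<Rightarrow> real" where
  "limit_frequency J V = lim (\<lambda>t. frequency {n. restrict (x n) J \<in> V} (s t))"

lemma tendsto_limit_frequency:
  "finite J \<Longrightarrow> (\<lambda>t. frequency {n. restrict (x n) J \<in> V} (s t)) \<longlonglongrightarrow> limit_frequency J V"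
  unfolding limit_frequency_def using convergent_frequency by (simp add: convergent_LIMSEQ_iff)

lemma limit_frequency_nonneg: "finite J \<Longrightarrow> 0 \<le> limit_frequency J V"
  by (rule LIMSEQ_le_const[OF tendsto_limit_frequency]) (auto simp: frequency_nonneg)

lemma limit_frequency_cong:
  "(\<And>n. restrict (x n) J \<in> V \<longleftrightarrow> restrict (x n) H \<in> V') \<Longrightarrow>
    limit_frequency J V = limit_frequency H V'"
  by (simp add: limit_frequency_def)

lemma limit_frequency_sum:
  assumes "finite J"
  shows "limit_frequency J V = (\<Sum>u\<in>binary_patterns J \<inter> V. limit_frequency J {u})"
proof -
  have "{u \<in> binary_patterns J. restrict u J \<in> V} = binary_patterns J \<inter> V"
    using restrict_binary_pattern by auto
  then have "(\<lambda>t. frequency {n. restrict (x n) J \<in> V} (s t)) \<longlonglongrightarrow>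
      (\<Sum>u\<in>binary_patterns J \<inter> V. limit_frequency J {u})"
    unfolding frequency_split_patterns[OF assms order_refl, of V]
    using tendsto_limit_frequency[OF assms, of "{u}" for u] by (auto intro!: tendsto_sum)
  then show ?thesis
    using tendsto_limit_frequency[OF assms] LIMSEQ_unique by blast
qed

lemma limit_frequency_binary_patterns:
  assumes "finite J"
  shows "limit_frequency J (binary_patterns J) = 1"
proof -
  have "eventually (\<lambda>t. frequency {n. restrict (x n) J \<in> binary_patterns J} (s t) = 1) sequentially"
    unfolding eventually_sequentially
  proof (intro exI allI impI)
    fix t :: nat
    assume "1 \<le> t"
    then have "1 \<le> s t"
      using seq_suble[OF strict_mono_subseq, of t] by linarith
    then show "frequency {n. restrict (x n) J \<in> binary_patterns J} (s t) = 1"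
      using restrict_in_binary_patterns frequency_UNIV by simp
  qed
  then have "(\<lambda>t. frequency {n. restrict (x n) J \<in> binary_patterns J} (s t)) \<longlonglongrightarrow> 1"
    by (rule tendsto_eventually)
  then show ?thesis
    using tendsto_limit_frequency[OF assms] LIMSEQ_unique by blast
qed

definition pattern_weight :: "nat set \<Rightarrow> (nat \<Rightarrow> real) \<Rightarrow> real" where
  "pattern_weight J u = (if u \<in> binary_patterns J then limit_frequency J {u} else 0)"

lemma pattern_weight_nonneg: "finite J \<Longrightarrow> 0 \<le> pattern_weight J u"
  by (simp add: pattern_weight_def limit_frequency_nonneg)

lemma nn_integral_pattern_weight:
  assumes "finite J"
  shows "(\<integral>\<^sup>+u. ennreal (pattern_weight J u) \<partial>count_space UNIV) = 1"
proof -
  have "(\<integral>\<^sup>+u. ennreal (pattern_weight J u) \<partial>count_space UNIV) =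
      (\<integral>\<^sup>+u. ennreal (limit_frequency J {u}) \<partial>count_space (binary_patterns J))"
    by (subst nn_integral_count_space_indicator)
       (auto intro!: nn_integral_cong simp: pattern_weight_def indicator_def)
  also have "\<dots> = ennreal (\<Sum>u\<in>binary_patterns J. limit_frequency J {u})"
    using assms finite_binary_patterns
    by (simp add: nn_integral_count_space_finite limit_frequency_nonneg sum_ennreal)
  also have "\<dots> = 1"
    using limit_frequency_sum[OF assms, of "binary_patterns J"] limit_frequency_binary_patterns[OF assms]
    by simp
  finally show ?thesis .
qed

(* The finite-dimensional distributions handed to Kolmogorov's extension theorem. *)
definition marginal :: "nat set \<Rightarrow> (nat \<Rightarrow> real) measure" where
  "marginal J = distr (measure_pmf (embed_pmf (pattern_weight J))) (\<Pi>\<^sub>M i\<in>J. borel) (\<lambda>u. restrict u J)"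

lemma sets_marginal [simp]: "sets (marginal J) = sets (\<Pi>\<^sub>M i\<in>J. borel)"
  by (simp add: marginal_def)

lemma prob_space_marginal: "prob_space (marginal J)"
  unfolding marginal_def by (rule measure_pmf.prob_space_distr) (simp add: space_PiM)

lemma emeasure_marginal:
  assumes J: "finite J" and Y: "Y \<in> sets (\<Pi>\<^sub>M i\<in>J. borel)"
  shows "emeasure (marginal J) Y = ennreal (limit_frequency J Y)"
proof -
  let ?p = "embed_pmf (pattern_weight J)"
  have pmf_p: "pmf ?p u = pattern_weight J u" for u
    by (rule pmf_embed_pmf[OF pattern_weight_nonneg[OF J] nn_integral_pattern_weight[OF J]])
  have set_p: "set_pmf ?p \<subseteq> binary_patterns J"
    by (auto simp: set_pmf_iff pmf_p pattern_weight_def split: if_splits)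
  have "emeasure (marginal J) Y = emeasure (measure_pmf ?p) ((\<lambda>u. restrict u J) -` Y)"
    unfolding marginal_def by (subst emeasure_distr) (auto simp: space_PiM Y)
  also have "\<dots> = emeasure (measure_pmf ?p) (Y \<inter> binary_patterns J)"
    using set_p restrict_binary_pattern
    by (intro emeasure_eq_AE) (auto simp: AE_measure_pmf_iff)
  also have "\<dots> = ennreal (\<Sum>u\<in>Y \<inter> binary_patterns J. pattern_weight J u)"
    using finite_binary_patterns[OF J] by (subst emeasure_measure_pmf_finite) (auto simp: pmf_p)
  also have "(\<Sum>u\<in>Y \<inter> binary_patterns J. pattern_weight J u) = limit_frequency J Y"
    by (simp add: limit_frequency_sum[OF J, of Y] pattern_weight_def Int_commute)
  finally show ?thesis .
qed

lemma marginal_projective: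
  assumes "J \<subseteq> H" and H: "finite H"
  shows "marginal J = distr (marginal H) (\<Pi>\<^sub>M i\<in>J. borel) (\<lambda>f. restrict f J)"
proof (rule measure_eqI)
  have J: "finite J"
    using assms finite_subset by blast
  have restrict_meas: "(\<lambda>f. restrict f J) \<in> marginal H \<rightarrow>\<^sub>M (\<Pi>\<^sub>M i\<in>J. borel)"
    using assms(1) by (simp add: measurable_cong_sets[OF sets_marginal refl] measurable_restrict_subset)
  have space_H: "space (marginal H) = space (\<Pi>\<^sub>M i\<in>H. borel)"
    by (rule sets_eq_imp_space_eq) simp
  fix Y
  assume "Y \<in> sets (marginal J)"
  then have Y: "Y \<in> sets (\<Pi>\<^sub>M i\<in>J. borel)"
    by simp
  have "limit_frequency H ((\<lambda>f. restrict f J) -` Y \<inter> space (marginal H)) = limit_frequency J Y"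
    using assms(1) by (intro limit_frequency_cong) (auto simp: space_H space_PiM inf.absorb2)
  then show "emeasure (marginal J) Y = emeasure (distr (marginal H) (\<Pi>\<^sub>M i\<in>J. borel) (\<lambda>f. restrict f J)) Y"
    using measurable_sets[OF restrict_meas Y]
    by (simp add: emeasure_distr[OF restrict_meas Y] emeasure_marginal J H Y)
qed simp

lemma polish_projective_marginal: "polish_projective UNIV marginal"
  unfolding polish_projective_def projective_family_def
  using marginal_projective prob_space_marginal by blast

lemma ex_empirical_limit_measure: "\<exists>\<mu>. empirical_limit \<mu> x s"
proof -
  interpret polish_projective UNIV marginal
    by (rule polish_projective_marginal)
  have cylinder: "prod_emb UNIV (\<lambda>_. borel :: real measure) J V = {\<omega>. restrict \<omega> J \<in> V}" for J V
    by (auto simp: prod_emb_def PiE_UNIV_domain)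
  have "empirical_limit lim x s"
  proof unfold_locales
    fix J :: "nat set" and V :: "(nat \<Rightarrow> real) set"
    assume J: "finite J" and V: "V \<in> sets (\<Pi>\<^sub>M i\<in>J. borel)"
    have "measure lim {\<omega>. restrict \<omega> J \<in> V} = limit_frequency J V"
      using measure_lim_emb[OF _ J V] emeasure_marginal[OF J V] limit_frequency_nonneg[OF J]
      by (simp add: cylinder measure_def)
    then show "(\<lambda>t. frequency {n. restrict (x n) J \<in> V} (s t))
        \<longlonglongrightarrow> measure lim {\<omega>. restrict \<omega> J \<in> V}"
      using tendsto_limit_frequency[OF J] by simp
  qed (use strict_mono_subseq in auto)
  then show ?thesis ..
qed

end

lemma ex_empirical_limit:
  assumes "\<And>n i. x n i \<in> {0, 1}"
  shows "\<exists>\<mu> s. empirical_limit \<mu> x s"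
proof -
  obtain s where "binary_frequency_limits x s"
    using ex_subseq_convergent_pattern_frequencies[of x] assms
    by (metis binary_frequency_limits.intro)
  then show ?thesis
    using binary_frequency_limits.ex_empirical_limit_measure by blast
qed

section \<open>Cluster points\<close>

definition cluster_point :: "(nat \<Rightarrow> nat \<Rightarrow> 'a) \<Rightarrow> nat set \<Rightarrow> (nat \<Rightarrow> 'a) \<Rightarrow> bool" where
  "cluster_point x Q b \<longleftrightarrow> (\<forall>k M. \<exists>n>M. n \<in> Q \<and> (\<forall>i<k. x n i = b i))"

definition apart_from :: "(nat \<Rightarrow> nat \<Rightarrow> 'a) \<Rightarrow> nat set \<Rightarrow> nat \<Rightarrow> (nat \<Rightarrow> 'a) set" where
  "apart_from x Q j = {b. \<forall>n>j. n \<in> Q \<longrightarrow> (\<exists>i<j. x n i \<noteq> b i)}"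

lemma not_cluster_point_eq_UN_apart_from:
  "{b. \<not> cluster_point x Q b} = (\<Union>j. apart_from x Q j)"
proof (intro set_eqI iffI)
  fix b
  assume "b \<in> {b. \<not> cluster_point x Q b}"
  then obtain k M where kM: "\<forall>n>M. n \<in> Q \<longrightarrow> (\<exists>i<k. x n i \<noteq> b i)"
    by (auto simp: cluster_point_def)
  have "b \<in> apart_from x Q (max k M)"
    unfolding apart_from_def
  proof (intro CollectI allI impI)
    fix n
    assume "max k M < n" "n \<in> Q"
    then obtain i where "i < k" "x n i \<noteq> b i"
      using kM by auto
    then show "\<exists>i<max k M. x n i \<noteq> b i"
      by (intro exI[of _ i]) auto
  qed
  then show "b \<in> (\<Union>j. apart_from x Q j)"
    by blast
qed (auto simp: apart_from_def cluster_point_def)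

lemma incseq_apart_from: "incseq (apart_from x Q)"
proof (rule incseq_SucI, rule subsetI)
  fix j b
  assume "b \<in> apart_from x Q j"
  show "b \<in> apart_from x Q (Suc j)"
    unfolding apart_from_def
  proof (intro CollectI allI impI)
    fix n
    assume "Suc j < n" "n \<in> Q"
    then obtain i where "i < j" "x n i \<noteq> b i"
      using \<open>b \<in> apart_from x Q j\<close> Suc_lessD unfolding apart_from_def by blast
    then show "\<exists>i<Suc j. x n i \<noteq> b i"
      by (intro exI[of _ i]) auto
  qed
qed

lemma apart_from_eq_cylinder:
  fixes x :: "nat \<Rightarrow> nat \<Rightarrow> 'a::topological_space"
  shows "apart_from x Q j = {b. restrict b {..<j} \<in>
    space (\<Pi>\<^sub>M i\<in>{..<j}. borel) - (\<lambda>n. restrict (x n) {..<j}) ` {n. j < n \<and> n \<in> Q}}"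
proof -
  have restrict_eq_iff: "restrict b {..<j} = restrict (x n) {..<j} \<longleftrightarrow> (\<forall>i<j. x n i = b i)" for n b
    by (auto simp: fun_eq_iff)
  show ?thesis
    by (auto simp: apart_from_def space_PiM restrict_eq_iff)
qed

lemma restrict_singleton_in_sets_PiM:
  fixes f :: "'i \<Rightarrow> 'a::t1_space"
  assumes "finite J"
  shows "{restrict f J} \<in> sets (\<Pi>\<^sub>M i\<in>J. borel)"
proof -
  have "(\<Pi>\<^sub>E i\<in>J. {f i}) = (\<Pi>\<^sub>E i\<in>J. {restrict f J i})"
    by (rule PiE_cong) simp
  also have "\<dots> = {restrict f J}"
    by (rule PiE_singleton) (rule restrict_extensional)
  finally show ?thesis
    using sets_PiM_I_finite[OF assms, of "\<lambda>i. {f i}" "\<lambda>_. borel"] by simp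
qed

lemma (in prob_space) nn_integral_liminf_frequency_le:
  assumes events: "\<And>n. E n \<in> events" and prob_le: "\<And>n. 1 \<le> n \<Longrightarrow> prob (E n) \<le> p"
  shows "(\<integral>\<^sup>+\<omega>. liminf (\<lambda>t. ennreal (frequency {n. \<omega> \<in> E n} (N t))) \<partial>M) \<le> ennreal p"
proof -
  have frequency_eq: "frequency {n. \<omega> \<in> E n} K = (\<Sum>n=1..K. indicator (E n) \<omega>) / real K" for \<omega> K
    by (simp add: frequency_eq_sum_of_bool indicator_def)
  have integrable: "integrable M (\<lambda>\<omega>. frequency {n. \<omega> \<in> E n} K)" for K
    unfolding frequency_eq using events
    by (intro Bochner_Integration.integrable_divide_zero Bochner_Integration.integrable_sum
        integrable_real_indicator) (auto simp: less_top[symmetric])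
  have "(\<integral>\<omega>. frequency {n. \<omega> \<in> E n} K \<partial>M) \<le> p" for K
  proof -
    have "0 \<le> p"
      using order_trans[OF measure_nonneg prob_le[OF order_refl]] .
    moreover have "(\<Sum>n=1..K. prob (E n)) \<le> real K * p"
      using sum_mono[of "{1..K}" "\<lambda>n. prob (E n)" "\<lambda>_. p"] prob_le by simp
    ultimately have "(\<Sum>n=1..K. prob (E n)) / real K \<le> p"
      by (cases "K = 0") (auto simp: divide_le_eq mult.commute)
    moreover have "(\<integral>\<omega>. frequency {n. \<omega> \<in> E n} K \<partial>M) = (\<Sum>n=1..K. prob (E n)) / real K"
      unfolding frequency_eq using events
      by (subst integral_divide_zero, subst Bochner_Integration.integral_sum)
        (auto simp: less_top[symmetric])
    ultimately show ?thesis
      by simp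
  qed
  then have nn_integral_le: "(\<integral>\<^sup>+\<omega>. ennreal (frequency {n. \<omega> \<in> E n} K) \<partial>M) \<le> ennreal p" for K
    using integrable frequency_nonneg by (simp add: nn_integral_eq_integral ennreal_leI)
  have "(\<integral>\<^sup>+\<omega>. liminf (\<lambda>t. ennreal (frequency {n. \<omega> \<in> E n} (N t))) \<partial>M)
      \<le> liminf (\<lambda>t. \<integral>\<^sup>+\<omega>. ennreal (frequency {n. \<omega> \<in> E n} (N t)) \<partial>M)"
    using integrable by (intro nn_integral_liminf) auto
  also have "\<dots> \<le> ennreal p"
    using nn_integral_le by (intro Liminf_le) auto
  finally show ?thesis .
qed

context empirical_limit
begin

lemma space_eq: "space \<mu> = UNIV"
  using sets_eq_imp_space_eq[OF sets_eq] by (simp add: space_PiM PiE_UNIV_domain)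

lemma measurable_component [measurable]: "(\<lambda>\<omega>. \<omega> i) \<in> borel_measurable \<mu>"
  by (simp add: measurable_cong_sets[OF sets_eq refl])

lemma cylinder_in_events:
  assumes "finite J" and "V \<in> sets (\<Pi>\<^sub>M i\<in>J. borel)"
  shows "{\<omega>. restrict \<omega> J \<in> V} \<in> events"
proof -
  have "prod_emb UNIV (\<lambda>_. borel) J V = {\<omega>. restrict \<omega> J \<in> V}"
    by (auto simp: prod_emb_def PiE_UNIV_domain)
  then show ?thesis
    using measurable_prod_emb[OF subset_UNIV assms(2)] sets_eq by simp
qed

lemma tendsto_frequency_component:
  "(\<lambda>t. frequency {n. x n i = c} (s t)) \<longlonglongrightarrow> prob {\<omega>. \<omega> i = c}"
proof -
  let ?V = "{v \<in> space (\<Pi>\<^sub>M j\<in>{i}. borel). v i = c}"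
  have "?V \<in> sets (\<Pi>\<^sub>M j\<in>{i}. borel)"
    by measurable
  moreover have "{n. restrict (x n) {i} \<in> ?V} = {n. x n i = c}"
    and "{\<omega>. restrict \<omega> {i} \<in> ?V} = {\<omega>. \<omega> i = c}"
    by (auto simp: space_PiM)
  ultimately show ?thesis
    using tendsto_frequency[of "{i}" ?V] by simp
qed

lemma prob_component_ge_liminf:
  assumes "ereal \<gamma> \<le> liminf (\<lambda>N. ereal (frequency {n. x n i = 1} N))"
  shows "\<gamma> \<le> prob {\<omega>. \<omega> i = 1}"
  using ge_limit_of_subseq[OF strict_mono_subseq tendsto_frequency_component assms] .

lemma apart_from_in_events: "apart_from x Q j \<in> events"
  and emeasure_apart_from_le:
    "emeasure \<mu> (apart_from x Q j) \<le> liminf (\<lambda>t. ennreal (frequency (- Q) (s t)))"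
proof -
  define V where
    "V = space (\<Pi>\<^sub>M i\<in>{..<j}. borel) - (\<lambda>n. restrict (x n) {..<j}) ` {n. j < n \<and> n \<in> Q}"
  have "(\<lambda>n. restrict (x n) {..<j}) ` {n. j < n \<and> n \<in> Q} \<in> sets (\<Pi>\<^sub>M i\<in>{..<j}. borel)"
    by (rule sets.countable) (auto simp: restrict_singleton_in_sets_PiM)
  then have V: "V \<in> sets (\<Pi>\<^sub>M i\<in>{..<j}. borel)"
    unfolding V_def by (rule sets.Diff[OF sets.top])
  have apart_from_eq: "apart_from x Q j = {b. restrict b {..<j} \<in> V}"
    by (simp add: V_def apart_from_eq_cylinder)
  show "apart_from x Q j \<in> events"
    unfolding apart_from_eq using V by (rule cylinder_in_events[rotated]) simp
  have visits_V: "{n. restrict (x n) {..<j} \<in> V} \<subseteq> {..j} \<union> - Q"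
  proof
    fix n
    assume "n \<in> {n. restrict (x n) {..<j} \<in> V}"
    then have "\<not> (j < n \<and> n \<in> Q)"
      unfolding V_def by blast
    then show "n \<in> {..j} \<union> - Q"
      by auto
  qed
  have frequency_le: "frequency {n. restrict (x n) {..<j} \<in> V} (s t) - real j / real (s t)
      \<le> frequency (- Q) (s t)" for t
    using frequency_le_initial_segment_Un[OF visits_V, of "s t"] by simp
  have "(\<lambda>t. real j / real (s t)) \<longlonglongrightarrow> 0"
    using LIMSEQ_subseq_LIMSEQ[OF lim_const_over_n strict_mono_subseq] by (simp add: o_def)
  then have "(\<lambda>t. frequency {n. restrict (x n) {..<j} \<in> V} (s t) - real j / real (s t))
      \<longlonglongrightarrow> prob (apart_from x Q j) - 0"
    unfolding apart_from_eq by (intro tendsto_diff tendsto_frequency V) auto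
  then have "ennreal (prob (apart_from x Q j)) \<le> liminf (\<lambda>t. ennreal (frequency (- Q) (s t)))"
    using frequency_le by (intro ennreal_le_liminf_of_tendsto) auto
  then show "emeasure \<mu> (apart_from x Q j) \<le> liminf (\<lambda>t. ennreal (frequency (- Q) (s t)))"
    by (simp add: emeasure_eq_measure)
qed

lemma emeasure_not_cluster_point_le:
  "emeasure \<mu> {b. \<not> cluster_point x Q b} \<le> liminf (\<lambda>t. ennreal (frequency (- Q) (s t)))"
proof -
  have "emeasure \<mu> (\<Union>j. apart_from x Q j) = (SUP j. emeasure \<mu> (apart_from x Q j))"
    using apart_from_in_events incseq_apart_from by (intro SUP_emeasure_incseq[symmetric]) auto
  also have "\<dots> \<le> liminf (\<lambda>t. ennreal (frequency (- Q) (s t)))"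
    using emeasure_apart_from_le by (rule SUP_least)
  finally show ?thesis
    by (simp only: not_cluster_point_eq_UN_apart_from)
qed

lemma nn_integral_emeasure_not_cluster_point_le:
  assumes "\<And>n. 1 \<le> n \<Longrightarrow> \<gamma> \<le> prob {\<omega>. \<omega> (h n) = 1}"
  shows "(\<integral>\<^sup>+a. emeasure \<mu> {b. \<not> cluster_point x {n. a (h n) = 1} b} \<partial>\<mu>) \<le> ennreal (1 - \<gamma>)"
proof -
  have "(\<integral>\<^sup>+a. emeasure \<mu> {b. \<not> cluster_point x {n. a (h n) = 1} b} \<partial>\<mu>)
      \<le> (\<integral>\<^sup>+a. liminf (\<lambda>t. ennreal (frequency {n. a \<in> {\<omega>. \<omega> (h n) \<noteq> 1}} (s t))) \<partial>\<mu>)"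
    using emeasure_not_cluster_point_le[of "{n. a (h n) = 1}" for a]
    by (intro nn_integral_mono) (simp add: Compl_eq)
  also have "\<dots> \<le> ennreal (1 - \<gamma>)"
  proof (rule nn_integral_liminf_frequency_le)
    fix n :: nat
    have "{\<omega> \<in> space \<mu>. \<omega> (h n) \<noteq> 1} \<in> events"
      by measurable
    then show "{\<omega>. \<omega> (h n) \<noteq> 1} \<in> events"
      by (simp add: space_eq)
  next
    fix n :: nat
    assume "1 \<le> n"
    have "prob {\<omega>. \<omega> (h n) \<noteq> 1} = prob (space \<mu> - {\<omega> \<in> space \<mu>. \<omega> (h n) = 1})"
      by (rule arg_cong[where f = prob]) (auto simp: space_eq)
    also have "\<dots> = 1 - prob {\<omega> \<in> space \<mu>. \<omega> (h n) = 1}"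
      by (rule prob_compl) measurable
    also have "\<dots> \<le> 1 - \<gamma>"
      using assms[OF \<open>1 \<le> n\<close>] by (simp add: space_eq)
    finally show "prob {\<omega>. \<omega> (h n) \<noteq> 1} \<le> 1 - \<gamma>" .
  qed
  finally show ?thesis .
qed

lemma ex_mutual_cluster_points:
  assumes g: "\<And>n. 1 \<le> n \<Longrightarrow> \<gamma> \<le> prob {\<omega>. \<omega> (g n) = 1}"
    and h: "\<And>n. 1 \<le> n \<Longrightarrow> \<delta> \<le> prob {\<omega>. \<omega> (h n) = 1}"
    and "1 < \<gamma> + \<delta>"
  shows "\<exists>a b. cluster_point x {n. a (g n) = 1} b \<and> cluster_point x {n. b (h n) = 1} a"
proof (rule ccontr)
  interpret pair: pair_prob_space \<mu> \<mu>
    by unfold_locales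
  define N1 where "N1 = {p :: (nat \<Rightarrow> real) \<times> (nat \<Rightarrow> real).
    \<not> cluster_point x {n. fst p (g n) = 1} (snd p)}"
  define N2 where "N2 = {p :: (nat \<Rightarrow> real) \<times> (nat \<Rightarrow> real).
    \<not> cluster_point x {n. snd p (h n) = 1} (fst p)}"
  have space_pair: "space (\<mu> \<Otimes>\<^sub>M \<mu>) = UNIV"
    by (simp add: space_pair_measure space_eq)
  have "{p \<in> space (\<mu> \<Otimes>\<^sub>M \<mu>). \<not> cluster_point x {n. fst p (g n) = 1} (snd p)}
      \<in> sets (\<mu> \<Otimes>\<^sub>M \<mu>)"
    and "{p \<in> space (\<mu> \<Otimes>\<^sub>M \<mu>). \<not> cluster_point x {n. snd p (h n) = 1} (fst p)}
      \<in> sets (\<mu> \<Otimes>\<^sub>M \<mu>)"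
    unfolding cluster_point_def by measurable
  then have N1: "N1 \<in> sets (\<mu> \<Otimes>\<^sub>M \<mu>)" and N2: "N2 \<in> sets (\<mu> \<Otimes>\<^sub>M \<mu>)"
    by (simp_all add: N1_def N2_def space_pair)
  have "emeasure (\<mu> \<Otimes>\<^sub>M \<mu>) N1 = (\<integral>\<^sup>+a. emeasure \<mu> (Pair a -` N1) \<partial>\<mu>)"
    by (rule emeasure_pair_measure_alt[OF N1])
  also have "\<dots> \<le> ennreal (1 - \<gamma>)"
    using nn_integral_emeasure_not_cluster_point_le[OF g] by (simp add: N1_def)
  finally have N1_le: "emeasure (\<mu> \<Otimes>\<^sub>M \<mu>) N1 \<le> ennreal (1 - \<gamma>)" .
  have "emeasure (\<mu> \<Otimes>\<^sub>M \<mu>) N2 = (\<integral>\<^sup>+b. emeasure \<mu> ((\<lambda>a. (a, b)) -` N2) \<partial>\<mu>)"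
    by (rule pair.emeasure_pair_measure_alt2[OF N2])
  also have "\<dots> \<le> ennreal (1 - \<delta>)"
    using nn_integral_emeasure_not_cluster_point_le[OF h] by (simp add: N2_def)
  finally have N2_le: "emeasure (\<mu> \<Otimes>\<^sub>M \<mu>) N2 \<le> ennreal (1 - \<delta>)" .
  assume "\<nexists>a b. cluster_point x {n. a (g n) = 1} b \<and> cluster_point x {n. b (h n) = 1} a"
  then have "space (\<mu> \<Otimes>\<^sub>M \<mu>) = N1 \<union> N2"
    by (auto simp: space_pair N1_def N2_def)
  then have "1 \<le> emeasure (\<mu> \<Otimes>\<^sub>M \<mu>) N1 + emeasure (\<mu> \<Otimes>\<^sub>M \<mu>) N2"
    using pair.emeasure_space_1 emeasure_subadditive[OF N1 N2] by simp
  also have "\<dots> \<le> ennreal (1 - \<gamma>) + ennreal (1 - \<delta>)"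
    using N1_le N2_le by (rule add_mono)
  also have "\<dots> = ennreal ((1 - \<gamma>) + (1 - \<delta>))"
    using g[of 1] h[of 1] prob_le_1 by (subst ennreal_plus) (auto intro: order_trans)
  finally show False
    using \<open>1 < \<gamma> + \<delta>\<close> by simp
qed

end

section \<open>Half-graphs\<close>

lemma interleaved_subseqs_of_cluster_points:
  fixes x :: "nat \<Rightarrow> nat \<Rightarrow> 'a::one"
  assumes cluster_b: "cluster_point x {n. a (2 * n) = 1} b"
    and cluster_a: "cluster_point x {n. b (2 * n + 1) = 1} a"
  obtains r c :: "nat \<Rightarrow> nat"
  where "strict_mono r" and "strict_mono c" and "0 < r 0" and "0 < c 0"
    and "\<And>i j. j \<le> i \<Longrightarrow> x (r i) (2 * c j) = 1"
    and "\<And>i j. i < j \<Longrightarrow> x (c j) (2 * r i + 1) = 1"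
proof -
  define F where "F m = (SOME n. m < n \<and> a (2 * n) = 1 \<and> (\<forall>i<2 * m + 2. x n i = b i))" for m
  define G where "G m = (SOME n. m < n \<and> b (2 * n + 1) = 1 \<and> (\<forall>i<2 * m + 1. x n i = a i))" for m
  have "\<exists>n. m < n \<and> a (2 * n) = 1 \<and> (\<forall>i<2 * m + 2. x n i = b i)" for m
    using cluster_b unfolding cluster_point_def by blast
  then have F: "m < F m \<and> a (2 * F m) = 1 \<and> (\<forall>i<2 * m + 2. x (F m) i = b i)" for m
    unfolding F_def by (rule someI_ex)
  have "\<exists>n. m < n \<and> b (2 * n + 1) = 1 \<and> (\<forall>i<2 * m + 1. x n i = a i)" for m
    using cluster_a unfolding cluster_point_def by blast
  then have G: "m < G m \<and> b (2 * G m + 1) = 1 \<and> (\<forall>i<2 * m + 1. x (G m) i = a i)" for m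
    unfolding G_def by (rule someI_ex)
  (* Columns are chosen close to b and rows close to a: c (j + 1) = F (r j) agrees with b on the
     coordinates 2 * r i + 1 of all earlier rows, and r j = G (c j) agrees with a on the
     coordinates 2 * c i of all columns so far. *)
  define cr where "cr = rec_nat (F 0, G (F 0)) (\<lambda>_ (_, r). (F r, G (F r)))"
  define c where "c j = fst (cr j)" for j
  define r where "r j = snd (cr j)" for j
  have c_0: "c 0 = F 0" and c_Suc: "c (Suc j) = F (r j)" for j
    by (simp_all add: c_def r_def cr_def split: prod.split)
  have r_c: "r j = G (c j)" for j
    by (cases j) (simp_all add: c_def r_def cr_def split: prod.split)
  have c_r: "c j < r j" and r_c_Suc: "r j < c (Suc j)" for j
    using F G by (simp_all add: r_c c_Suc)
  have "strict_mono c"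
    by (rule strict_monoI_Suc) (rule less_trans[OF c_r r_c_Suc])
  have "strict_mono r"
    by (rule strict_monoI_Suc) (rule less_trans[OF r_c_Suc c_r])
  have a_c: "a (2 * c j) = 1" for j
    using F by (cases j) (simp_all add: c_0 c_Suc)
  have b_r: "b (2 * r i + 1) = 1" for i
    using G by (simp add: r_c)
  show ?thesis
  proof (rule that[OF \<open>strict_mono r\<close> \<open>strict_mono c\<close>])
    show "0 < r 0" and "0 < c 0"
      using F[of 0] c_r[of 0] by (simp_all add: c_0)
  next
    fix i j :: nat
    assume "j \<le> i"
    then have "c j \<le> c i"
      using \<open>strict_mono c\<close> by (simp add: strict_mono_less_eq)
    then have "2 * c j < 2 * c i + 1"
      by simp
    then show "x (r i) (2 * c j) = 1"
      using G[of "c i"] a_c by (simp add: r_c)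
  next
    fix i j :: nat
    assume "i < j"
    then obtain j' where j': "j = Suc j'" and "i \<le> j'"
      by (cases j) auto
    then have "r i \<le> r j'"
      using \<open>strict_mono r\<close> by (simp add: strict_mono_less_eq)
    then have "2 * r i + 1 < 2 * r j' + 2"
      by simp
    then show "x (c j) (2 * r i + 1) = 1"
      using F[of "r j'"] b_r by (simp add: j' c_Suc)
  qed
qed

lemma has_fully_lower_triangular_submatrixI:
  fixes r c :: "nat \<Rightarrow> nat"
  assumes "strict_mono r" and "strict_mono c" and "0 < r 0" and "0 < c 0"
    and entries: "\<And>i j. A (r i) (c j) = 1 \<longleftrightarrow> j \<le> i"
  shows "has_fully_lower_triangular_submatrix A"
  unfolding has_fully_lower_triangular_submatrix_def
proof (intro exI conjI)
  show "inj_on (\<lambda>k. r (k - 1)) {1..}" and "inj_on (\<lambda>l. c (l - 1)) {1..}"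
    using strict_mono_eq[OF assms(1)] strict_mono_eq[OF assms(2)] by (auto intro!: inj_onI)
  have "0 < r k" and "0 < c k" for k
    using less_le_trans[OF assms(3) strict_mono_leD[OF assms(1) le0]]
      less_le_trans[OF assms(4) strict_mono_leD[OF assms(2) le0]] .
  then show "(\<lambda>k. r (k - 1)) ` {1..} \<subseteq> {1..}" and "(\<lambda>l. c (l - 1)) ` {1..} \<subseteq> {1..}"
    by (auto simp: Suc_le_eq)
  show "\<forall>k\<ge>1. \<forall>l\<ge>1. A (r (k - 1)) (c (l - 1)) = 1 \<longleftrightarrow> l \<le> k"
    using entries by auto
qed

definition incidence_code :: "(nat \<Rightarrow> nat \<Rightarrow> nat) \<Rightarrow> nat \<Rightarrow> nat \<Rightarrow> real" where
  "incidence_code A n i =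
    (if even i then of_bool (A n (i div 2) = 1) else of_bool (A (i div 2) n = 0))"

lemma incidence_code_even [simp]: "incidence_code A n (2 * c) = of_bool (A n c = 1)"
  by (simp add: incidence_code_def)

lemma incidence_code_odd [simp]: "incidence_code A n (Suc (2 * r)) = of_bool (A r n = 0)"
  by (simp add: incidence_code_def)

lemma incidence_code_binary: "incidence_code A n i \<in> {0, 1}"
  by (simp add: incidence_code_def of_bool_def)

lemma prob_column_component_ge:
  assumes "empirical_limit \<mu> (incidence_code A) s"
    and "\<And>i. 1 \<le> i \<Longrightarrow> A i c \<in> {0, 1}" and "ereal \<beta> \<le> lower_density (col A c)"
  shows "\<beta> \<le> measure \<mu> {\<omega>. \<omega> (2 * c) = 1}"
proof (rule empirical_limit.prob_component_ge_liminf[OF assms(1)])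
  have "frequency {n. incidence_code A n (2 * c) = 1} N = avg_seq (col A c) N" for N
    using assms(2) by (simp add: avg_seq_eq_frequency col_def)
  then show "ereal \<beta> \<le> liminf (\<lambda>N. ereal (frequency {n. incidence_code A n (2 * c) = 1} N))"
    using assms(3) by (simp add: lower_density_def)
qed

lemma prob_row_component_ge:
  assumes "empirical_limit \<mu> (incidence_code A) s"
    and "\<And>j. 1 \<le> j \<Longrightarrow> A r j \<in> {0, 1}" and "upper_density (row A r) \<le> ereal \<alpha>"
  shows "1 - \<alpha> \<le> measure \<mu> {\<omega>. \<omega> (2 * r + 1) = 1}"
proof -
  interpret empirical_limit \<mu> "incidence_code A" s
    by (rule assms(1))
  have "frequency {n. incidence_code A n (2 * r + 1) = 1} N = 1 - avg_seq (row A r) N"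
    if "1 \<le> N" for N
  proof -
    have "frequency {n. incidence_code A n (2 * r + 1) = 1} N = frequency (- {n. A r n = 1}) N"
      using assms(2) by (intro frequency_cong) fastforce
    then show ?thesis
      using assms(2) that by (simp add: frequency_Compl avg_seq_eq_frequency row_def)
  qed
  moreover have "1 \<le> s t" if "1 \<le> t" for t
    using seq_suble[OF strict_mono_subseq, of t] that by linarith
  ultimately have "eventually (\<lambda>t. 1 - frequency {n. incidence_code A n (2 * r + 1) = 1} (s t)
      = avg_seq (row A r) (s t)) sequentially"
    by (intro eventually_sequentiallyI[of 1]) simp
  then have "(\<lambda>t. avg_seq (row A r) (s t)) \<longlonglongrightarrow> 1 - prob {\<omega>. \<omega> (2 * r + 1) = 1}"
    by (rule Lim_transform_eventually[OF tendsto_diff[OF tendsto_const tendsto_frequency_component]])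
  then have "1 - prob {\<omega>. \<omega> (2 * r + 1) = 1} \<le> \<alpha>"
    using le_limit_of_subseq[OF strict_mono_subseq] assms(3) by (simp add: upper_density_def)
  then show ?thesis
    by simp
qed

lemma has_fully_lower_triangular_submatrix_of_cluster_points:
  assumes "cluster_point (incidence_code A) {n. a (2 * n) = 1} b"
    and "cluster_point (incidence_code A) {n. b (2 * n + 1) = 1} a"
  shows "has_fully_lower_triangular_submatrix A"
proof (rule interleaved_subseqs_of_cluster_points[OF assms])
  fix r c :: "nat \<Rightarrow> nat"
  assume "strict_mono r" "strict_mono c" "0 < r 0" "0 < c 0"
    and ones: "\<And>i j. j \<le> i \<Longrightarrow> incidence_code A (r i) (2 * c j) = 1"
    and zeros: "\<And>i j. i < j \<Longrightarrow> incidence_code A (c j) (2 * r i + 1) = 1"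
  have "A (r i) (c j) = 1 \<longleftrightarrow> j \<le> i" for i j
    using ones[of j i] zeros[of i j] by (cases "j \<le> i") auto
  then show ?thesis
    using \<open>strict_mono r\<close> \<open>strict_mono c\<close> \<open>0 < r 0\<close> \<open>0 < c 0\<close>
    by (intro has_fully_lower_triangular_submatrixI)
qed

theorem theorem4p5:
  fixes A :: "nat \<Rightarrow> nat \<Rightarrow> nat" and \<alpha> \<beta> :: real
  assumes binary: "\<And>i j. i \<ge> 1 \<Longrightarrow> j \<ge> 1 \<Longrightarrow> A i j \<in> {0, 1}"
    and "0 \<le> \<alpha>" and "\<alpha> < \<beta>" and "\<beta> \<le> 1"
    and rows: "\<And>i. i \<ge> 1 \<Longrightarrow> upper_density (row A i) \<le> ereal \<alpha>"
    and cols: "\<And>j. j \<ge> 1 \<Longrightarrow> lower_density (col A j) \<ge> ereal \<beta>"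
  shows "has_fully_lower_triangular_submatrix A"
proof -
  obtain \<mu> s where lim: "empirical_limit \<mu> (incidence_code A) s"
    using ex_empirical_limit[of "incidence_code A"] incidence_code_binary by blast
  have "\<beta> \<le> measure \<mu> {\<omega>. \<omega> (2 * c) = 1}" if "1 \<le> c" for c
    using prob_column_component_ge[OF lim] binary cols that by blast
  moreover have "1 - \<alpha> \<le> measure \<mu> {\<omega>. \<omega> (2 * r + 1) = 1}" if "1 \<le> r" for r
    using prob_row_component_ge[OF lim] binary rows that by blast
  ultimately obtain a b where "cluster_point (incidence_code A) {n. a (2 * n) = 1} b"
    and "cluster_point (incidence_code A) {n. b (2 * n + 1) = 1} a"
    using empirical_limit.ex_mutual_cluster_points[OF lim, of \<beta> "\<lambda>n. 2 * n" "1 - \<alpha>" "\<lambda>n. 2 * n + 1"]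
      \<open>\<alpha> < \<beta>\<close> by auto
  then show ?thesis
    by (rule has_fully_lower_triangular_submatrix_of_cluster_points)
qed

end
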